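(* Let $(R,d)$ be a finitely generated fusion algebra and let $\rho:\mathcal{C}_R\to B(\ell^2(I))$ be the right regular representation of $\mathcal{C}_R$. Then $\mathrm{F\o l}(R,d)\ge\mathrm{Kaz}(\rho,(R,d))^2$.
   Context: A fusion algebra $(R,d)$ consists of a set $I$ with distinguished $e$ and involution $\alpha\mapsto\bar\alpha$, a unital ring structure on $R=\mathbb{Z}[I]$ with unit $e$ and $\xi\eta=\sum_\alpha N^\alpha_{\xi,\eta}\alpha$, $N^\alpha_{\xi,\eta}\in\mathbb{Z}_{\ge0}$ finitely many nonzero, the involution extending to a $\mathbb{Z}$-linear antimultiplicative involution, Frobenius reciprocity $N^\alpha_{\xi,\eta}=N^\xi_{\alpha,\bar\eta}=N^\eta_{\bar\xi,\alpha}$, and $\mathbb{Z}$-linear multiplicative $d:R\to\mathbb{R}$ with $d(\bar\alpha)=d(\alpha)\ge1$ on $I$. $\mathrm{supp}(r)$: elements of $I$ with nonzero coefficient in $r$. $|A|=\sum_{\alpha\in A}d(\alpha)^2$, $A^c=I\setminus A$. A finite generating set is a finite $X\subseteq I$ with $\bar X=X$ such that each $\alpha\in I$ lies in $\mathrm{supp}(x_1\cdots x_n)$ for some $x_i\in X$; $R$ is finitely generated if one exists. $\partial_X(A)=\{\alpha\in A:\exists x\in X,\ \mathrm{supp}(\alpha x)\not\subseteq A\}\cup\{\alpha\in A^c:\exists x\in X,\ \mathrm{supp}(\alpha x)\not\subseteq A^c\}$; $\mathrm{F\o l}_X(R,d)=\inf_A|\partial_XA|/|A|$ over nonempty finite $A\subseteq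 I$ and $\mathrm{F\o l}(R,d)=\inf_X\mathrm{F\o l}_X(R,d)$ over finite generating sets. $\mathcal{C}_R=\mathbb{C}[I]$ is the complexification of $R$ (a unital $*$-algebra); the right regular representation is $\rho(\alpha)\delta_\beta=\sum_{\eta\in I}N^\eta_{\beta,\bar\alpha}\delta_\eta$. For a unital $*$-representation $\pi$ on $H_\pi$ and a finite generating set $X$, $\mathrm{Kaz}(X,\pi,(R,d))=\inf_{\xi\in H_\pi,\|\xi\|=1}\max_{\alpha\in X}\frac{\|\pi(\alpha)\xi-d(\alpha)\xi\|}{d(\alpha)}$ and $\mathrm{Kaz}(\pi,(R,d))=\inf_X\mathrm{Kaz}(X,\pi,(R,d))$ over finite generating sets. *)

theory Defs
  imports "HOL-Analysis.Analysis"
begin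

text \<open>A fusion algebra on the index set I = the type 'i.  The structure constants are
  N a x y = N^a_{x,y}, i.e. x y = sum_a N^a_{x,y} a.  e is the unit, bar the involution,
  d the dimension function (its Z-linear extension to R = Z[I] is determined by its values on I).\<close>

definition fusion_algebra ::
  "'i \<Rightarrow> ('i \<Rightarrow> 'i) \<Rightarrow> ('i \<Rightarrow> 'i \<Rightarrow> 'i \<Rightarrow> nat) \<Rightarrow> ('i \<Rightarrow> real) \<Rightarrow> bool" where
  "fusion_algebra e bar N d \<longleftrightarrow>
     (\<forall>a. bar (bar a) = a) \<and>
     (\<forall>x y. finite {a. N a x y \<noteq> 0}) \<and>
     (\<forall>a x. N a e x = (if a = x then 1 else 0) \<and> N a x e = (if a = x then 1 else 0)) \<and>
     (\<forall>a x y z. (\<Sum>b\<in>{b. N b x y \<noteq> 0}. N b x y * N a b z)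
              = (\<Sum>b\<in>{b. N b y z \<noteq> 0}. N b y z * N a x b)) \<and>
     (\<forall>a x y. N (bar a) (bar y) (bar x) = N a x y) \<and>
     (\<forall>a x y. N a x y = N x a (bar y) \<and> N a x y = N y (bar x) a) \<and>
     (\<forall>x y. d x * d y = (\<Sum>a\<in>{a. N a x y \<noteq> 0}. real (N a x y) * d a)) \<and>
     (\<forall>a. d (bar a) = d a \<and> d a \<ge> 1)"

text \<open>Coefficient function of the product x_1 x_2 ... x_n of basis elements.\<close>
primrec fus_word :: "('i \<Rightarrow> 'i \<Rightarrow> 'i \<Rightarrow> nat) \<Rightarrow> 'i \<Rightarrow> 'i list \<Rightarrow> 'i \<Rightarrow> nat" where
  "fus_word N e [] = (\<lambda>a. if a = e then 1 else 0)"
| "fus_word N e (x # xs) =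
     (\<lambda>a. \<Sum>b\<in>{b. fus_word N e xs b \<noteq> 0}. N a x b * fus_word N e xs b)"

definition gen_set ::
  "'i \<Rightarrow> ('i \<Rightarrow> 'i) \<Rightarrow> ('i \<Rightarrow> 'i \<Rightarrow> 'i \<Rightarrow> nat) \<Rightarrow> 'i set \<Rightarrow> bool" where
  "gen_set e bar N X \<longleftrightarrow> finite X \<and> bar ` X = X \<and>
     (\<forall>a. \<exists>xs. xs \<noteq> [] \<and> set xs \<subseteq> X \<and> fus_word N e xs a \<noteq> 0)"

definition finitely_generated ::
  "'i \<Rightarrow> ('i \<Rightarrow> 'i) \<Rightarrow> ('i \<Rightarrow> 'i \<Rightarrow> 'i \<Rightarrow> nat) \<Rightarrow> bool" where
  "finitely_generated e bar N \<longleftrightarrow> (\<exists>X. gen_set e bar N X)"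

definition fweight :: "('i \<Rightarrow> real) \<Rightarrow> 'i set \<Rightarrow> real" where
  "fweight d A = (\<Sum>a\<in>A. (d a)^2)"

definition fboundary :: "('i \<Rightarrow> 'i \<Rightarrow> 'i \<Rightarrow> nat) \<Rightarrow> 'i set \<Rightarrow> 'i set \<Rightarrow> 'i set" where
  "fboundary N X A =
     {a\<in>A. \<exists>x\<in>X. \<not> {b. N b a x \<noteq> 0} \<subseteq> A} \<union>
     {a\<in>-A. \<exists>x\<in>X. \<not> {b. N b a x \<noteq> 0} \<subseteq> -A}"

definition fol_X :: "('i \<Rightarrow> 'i \<Rightarrow> 'i \<Rightarrow> nat) \<Rightarrow> ('i \<Rightarrow> real) \<Rightarrow> 'i set \<Rightarrow> real" where
  "fol_X N d X = Inf ((\<lambda>A. fweight d (fboundary N X A) / fweight d A) ` {A. A \<noteq> {} \<and> finite A})"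

definition fol :: "'i \<Rightarrow> ('i \<Rightarrow> 'i) \<Rightarrow> ('i \<Rightarrow> 'i \<Rightarrow> 'i \<Rightarrow> nat) \<Rightarrow> ('i \<Rightarrow> real) \<Rightarrow> real" where
  "fol e bar N d = Inf (fol_X N d ` {X. gen_set e bar N X})"

definition is_l2 :: "('i \<Rightarrow> complex) \<Rightarrow> bool" where
  "is_l2 f \<longleftrightarrow> (\<lambda>i. (cmod (f i))^2) summable_on UNIV"

definition l2norm :: "('i \<Rightarrow> complex) \<Rightarrow> real" where
  "l2norm f = sqrt (infsum (\<lambda>i. (cmod (f i))^2) UNIV)"

text \<open>Right regular representation on basis elements a:
  rho(a) delta_b = sum_eta N^eta_{b, bar a} delta_eta, so
  (rho(a) f)(eta) = sum_b N^eta_{b, bar a} f(b) (a finite sum).\<close>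
definition rho :: "('i \<Rightarrow> 'i) \<Rightarrow> ('i \<Rightarrow> 'i \<Rightarrow> 'i \<Rightarrow> nat) \<Rightarrow> 'i \<Rightarrow> ('i \<Rightarrow> complex) \<Rightarrow> 'i \<Rightarrow> complex" where
  "rho bar N a f = (\<lambda>\<eta>. \<Sum>b\<in>{b. N \<eta> b (bar a) \<noteq> 0}. of_nat (N \<eta> b (bar a)) * f b)"

definition kaz_X ::
  "('i \<Rightarrow> 'i) \<Rightarrow> ('i \<Rightarrow> 'i \<Rightarrow> 'i \<Rightarrow> nat) \<Rightarrow> ('i \<Rightarrow> real) \<Rightarrow> 'i set \<Rightarrow> real" where
  "kaz_X bar N d X = Inf ((\<lambda>f. Max ((\<lambda>a. l2norm (\<lambda>i. rho bar N a f i - complex_of_real (d a) * f i) / d a) ` X))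
                         ` {f. is_l2 f \<and> l2norm f = 1})"

definition kaz_rho ::
  "'i \<Rightarrow> ('i \<Rightarrow> 'i) \<Rightarrow> ('i \<Rightarrow> 'i \<Rightarrow> 'i \<Rightarrow> nat) \<Rightarrow> ('i \<Rightarrow> real) \<Rightarrow> real" where
  "kaz_rho e bar N d = Inf (kaz_X bar N d ` {X. gen_set e bar N X})"

end

theory Submission
  imports Defs
begin

text \<open>For a nonempty finite set A consider the unit vector
  xi_A = |A|^(-1/2) sum_(alpha in A) d(alpha) delta_alpha.
  By Frobenius reciprocity the eta-coefficient of rho(x) xi_A is |A|^(-1/2) times the
  d-weighted mass of supp(eta x) inside A.  Since d is multiplicative this mass lies between 0 and
  d(eta) d(x); it equals d(eta) d(x) if supp(eta x) is contained in A, and 0 if supp(eta x) misses A.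
  Hence rho(x) xi_A - d(x) xi_A is supported on the boundary of A, with eta-coefficient at most
  d(x) d(eta) |A|^(-1/2) in modulus, so its norm is at most d(x) (|boundary A| / |A|)^(1/2).
  Taking infima over A and X gives the claim.\<close>

lemma l2norm_nonneg: "0 \<le> l2norm f"
  by (simp add: l2norm_def infsum_nonneg)

lemma l2norm_finite_support:
  assumes "finite B" and "\<And>i. i \<notin> B \<Longrightarrow> f i = 0"
  shows "is_l2 f" and "l2norm f = sqrt (\<Sum>i\<in>B. (cmod (f i))^2)"
proof -
  show "is_l2 f"
    unfolding is_l2_def
    using summable_on_cong_neutral[of UNIV B "\<lambda>i. (cmod (f i))^2" "\<lambda>i. (cmod (f i))^2"] assms
    by simp
  have "infsum (\<lambda>i. (cmod (f i))^2) UNIV = (\<Sum>i\<in>B. (cmod (f i))^2)"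
    by (subst infsum_cong_neutral[of B UNIV]) (use assms in auto)
  then show "l2norm f = sqrt (\<Sum>i\<in>B. (cmod (f i))^2)"
    by (simp add: l2norm_def)
qed

lemma l2norm_le_finite_support:
  assumes "finite B" and "\<And>i. i \<notin> B \<Longrightarrow> f i = 0" and "\<And>i. i \<in> B \<Longrightarrow> cmod (f i) \<le> w i"
  shows "l2norm f \<le> sqrt (\<Sum>i\<in>B. (w i)^2)"
proof -
  have "(\<Sum>i\<in>B. (cmod (f i))^2) \<le> (\<Sum>i\<in>B. (w i)^2)"
    by (rule sum_mono, rule power_mono) (use assms(3) in auto)
  then show ?thesis
    using l2norm_finite_support[OF assms(1,2)] by simp
qed

lemma exists_l2_unit_vector: "\<exists>f :: 'i \<Rightarrow> complex. is_l2 f \<and> l2norm f = 1"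
proof -
  fix a :: 'i
  let ?\<delta> = "\<lambda>i. if i = a then 1 else 0 :: complex"
  have "is_l2 ?\<delta> \<and> l2norm ?\<delta> = 1"
    using l2norm_finite_support[of "{a}" ?\<delta>] by simp
  then show ?thesis by blast
qed

lemma gen_set_finite: "gen_set e bar N X \<Longrightarrow> finite X"
  by (simp add: gen_set_def)

lemma gen_set_nonempty: "gen_set e bar N X \<Longrightarrow> X \<noteq> {}"
  unfolding gen_set_def by (metis empty_iff list.set_sel(1) subset_iff)

definition max_relative_defect ::
  "('i \<Rightarrow> 'i) \<Rightarrow> ('i \<Rightarrow> 'i \<Rightarrow> 'i \<Rightarrow> nat) \<Rightarrow> ('i \<Rightarrow> real) \<Rightarrow> 'i set \<Rightarrow> ('i \<Rightarrow> complex) \<Rightarrow> real"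
  where "max_relative_defect bar N d X f =
    Max ((\<lambda>a. l2norm (\<lambda>i. rho bar N a f i - complex_of_real (d a) * f i) / d a) ` X)"

lemma kaz_X_eq_Inf_max_relative_defect:
  "kaz_X bar N d X = Inf (max_relative_defect bar N d X ` {f. is_l2 f \<and> l2norm f = 1})"
  by (simp add: kaz_X_def max_relative_defect_def)

definition normalized_dim_vector :: "('i \<Rightarrow> real) \<Rightarrow> 'i set \<Rightarrow> 'i \<Rightarrow> complex" where
  "normalized_dim_vector d A b =
     (if b \<in> A then complex_of_real (d b / sqrt (fweight d A)) else 0)"

definition dim_mass_in ::
  "('i \<Rightarrow> 'i \<Rightarrow> 'i \<Rightarrow> nat) \<Rightarrow> ('i \<Rightarrow> real) \<Rightarrow> 'i set \<Rightarrow> 'i \<Rightarrow> 'i \<Rightarrow> real" where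
  "dim_mass_in N d A \<eta> x = (\<Sum>b\<in>{b. N b \<eta> x \<noteq> 0} \<inter> A. real (N b \<eta> x) * d b)"

context
  fixes e :: 'i and bar :: "'i \<Rightarrow> 'i" and N :: "'i \<Rightarrow> 'i \<Rightarrow> 'i \<Rightarrow> nat" and d :: "'i \<Rightarrow> real"
  assumes fusion: "fusion_algebra e bar N d"
begin

lemma finite_fusion_support: "finite {a. N a x y \<noteq> 0}"
  using fusion by (simp add: fusion_algebra_def)

lemma bar_bar: "bar (bar a) = a"
  using fusion by (simp add: fusion_algebra_def)

lemma fusion_frobenius: "N a x y = N x a (bar y)"
  using fusion by (simp add: fusion_algebra_def)

lemma dim_mult: "d x * d y = (\<Sum>a\<in>{a. N a x y \<noteq> 0}. real (N a x y) * d a)"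
  using fusion by (simp add: fusion_algebra_def)

lemma dim_ge_1: "d a \<ge> 1"
  using fusion by (simp add: fusion_algebra_def)

lemma dim_pos: "0 < d a"
  using dim_ge_1[of a] by linarith

lemma rho_apply: "rho bar N x f \<eta> = (\<Sum>b\<in>{b. N b \<eta> x \<noteq> 0}. of_nat (N b \<eta> x) * f b)"
proof -
  have "N \<eta> b (bar x) = N b \<eta> x" for b
    by (metis fusion_frobenius bar_bar)
  then show ?thesis by (simp add: rho_def)
qed

lemma fweight_pos: "finite A \<Longrightarrow> A \<noteq> {} \<Longrightarrow> fweight d A > 0"
  unfolding fweight_def by (intro sum_pos zero_less_power dim_pos)

lemma finite_fboundary:
  assumes "finite X" and "finite A"
  shows "finite (fboundary N X A)"
proof -
  have "fboundary N X A \<subseteq> A \<union> (\<Union>x\<in>X. \<Union>b\<in>A. {\<eta>. N \<eta> b (bar x) \<noteq> 0})"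
    unfolding fboundary_def using fusion_frobenius by fastforce
  then show ?thesis
    using assms finite_fusion_support by (auto intro: finite_subset)
qed

lemma normalized_dim_vector_unit:
  assumes "finite A" and "A \<noteq> {}"
  shows "is_l2 (normalized_dim_vector d A)" and "l2norm (normalized_dim_vector d A) = 1"
proof -
  let ?D = "fweight d A"
  have D: "?D > 0" using fweight_pos[OF assms] .
  have vanish: "i \<notin> A \<Longrightarrow> normalized_dim_vector d A i = 0" for i
    by (simp add: normalized_dim_vector_def)
  show "is_l2 (normalized_dim_vector d A)"
    using l2norm_finite_support(1)[OF assms(1) vanish] .
  have "(\<Sum>i\<in>A. (cmod (normalized_dim_vector d A i))^2) = (\<Sum>i\<in>A. (d i)^2 / ?D)"
    using D by (intro sum.cong) (simp_all add: normalized_dim_vector_def power_divide del: of_real_divide)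
  also have "\<dots> = 1"
    using D by (simp add: fweight_def flip: sum_divide_distrib)
  finally show "l2norm (normalized_dim_vector d A) = 1"
    using l2norm_finite_support(2)[OF assms(1) vanish] by simp
qed

lemma dim_mass_in_nonneg: "0 \<le> dim_mass_in N d A \<eta> x"
  unfolding dim_mass_in_def using dim_pos by (intro sum_nonneg) (simp add: less_imp_le)

lemma dim_mass_in_le: "dim_mass_in N d A \<eta> x \<le> d \<eta> * d x"
  unfolding dim_mass_in_def dim_mult
  using dim_pos by (intro sum_mono2 finite_fusion_support) (simp_all add: less_imp_le)

lemma dim_mass_in_full: "{b. N b \<eta> x \<noteq> 0} \<subseteq> A \<Longrightarrow> dim_mass_in N d A \<eta> x = d \<eta> * d x"
  by (simp add: dim_mass_in_def dim_mult Int_absorb2)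

lemma dim_mass_in_empty: "{b. N b \<eta> x \<noteq> 0} \<subseteq> -A \<Longrightarrow> dim_mass_in N d A \<eta> x = 0"
  unfolding dim_mass_in_def by (rule sum.neutral) auto

lemma rho_normalized_dim_vector:
  "rho bar N x (normalized_dim_vector d A) \<eta> = complex_of_real (dim_mass_in N d A \<eta> x / sqrt (fweight d A))"
proof -
  let ?S = "{b. N b \<eta> x \<noteq> 0}"
  have "rho bar N x (normalized_dim_vector d A) \<eta>
      = (\<Sum>b\<in>?S. if b \<in> A then complex_of_real (real (N b \<eta> x) * d b / sqrt (fweight d A)) else 0)"
    unfolding rho_apply normalized_dim_vector_def by (intro sum.cong) auto
  also have "\<dots> = (\<Sum>b\<in>?S \<inter> A. complex_of_real (real (N b \<eta> x) * d b / sqrt (fweight d A)))"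
    by (simp only: sum.inter_restrict[OF finite_fusion_support])
  finally show ?thesis
    by (simp add: dim_mass_in_def sum_divide_distrib del: of_real_divide)
qed

lemma rho_normalized_dim_vector_defect:
  "rho bar N x (normalized_dim_vector d A) \<eta> - complex_of_real (d x) * normalized_dim_vector d A \<eta>
     = complex_of_real ((dim_mass_in N d A \<eta> x - (if \<eta> \<in> A then d \<eta> * d x else 0)) / sqrt (fweight d A))"
  by (simp add: rho_normalized_dim_vector normalized_dim_vector_def diff_divide_distrib mult.commute)

lemma dim_mass_in_deviation_le:
  "\<bar>dim_mass_in N d A \<eta> x - (if \<eta> \<in> A then d \<eta> * d x else 0)\<bar> \<le> d x * d \<eta>"
  using dim_mass_in_nonneg[of A \<eta> x] dim_mass_in_le[of A \<eta> x] dim_ge_1[of \<eta>] dim_ge_1[of x]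
  by (auto simp: mult.commute)

lemma dim_mass_in_outside_fboundary:
  assumes "x \<in> X" and "\<eta> \<notin> fboundary N X A"
  shows "dim_mass_in N d A \<eta> x = (if \<eta> \<in> A then d \<eta> * d x else 0)"
  using assms dim_mass_in_full[of \<eta> x A] dim_mass_in_empty[of \<eta> x A]
  unfolding fboundary_def by auto

lemma l2norm_rho_normalized_dim_vector_defect_le:
  assumes "finite X" and "finite A" and "A \<noteq> {}" and "x \<in> X"
  shows "l2norm (\<lambda>i. rho bar N x (normalized_dim_vector d A) i
                    - complex_of_real (d x) * normalized_dim_vector d A i)
         \<le> d x * sqrt (fweight d (fboundary N X A) / fweight d A)"
proof -
  let ?D = "fweight d A" and ?B = "fboundary N X A"
  have D: "?D > 0" using fweight_pos[OF assms(2,3)] .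
  have "l2norm (\<lambda>i. rho bar N x (normalized_dim_vector d A) i
                    - complex_of_real (d x) * normalized_dim_vector d A i)
        \<le> sqrt (\<Sum>i\<in>?B. (d x * d i / sqrt ?D)^2)"
  proof (rule l2norm_le_finite_support[OF finite_fboundary[OF assms(1,2)]])
    fix i
    show "i \<notin> ?B \<Longrightarrow> rho bar N x (normalized_dim_vector d A) i
                        - complex_of_real (d x) * normalized_dim_vector d A i = 0"
      using dim_mass_in_outside_fboundary[OF assms(4)]
      by (simp add: rho_normalized_dim_vector_defect)
    have "cmod (rho bar N x (normalized_dim_vector d A) i
                - complex_of_real (d x) * normalized_dim_vector d A i)
          = \<bar>dim_mass_in N d A i x - (if i \<in> A then d i * d x else 0)\<bar> / sqrt ?D"
      using D by (simp only: rho_normalized_dim_vector_defect norm_of_real abs_div) simp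
    also have "\<dots> \<le> d x * d i / sqrt ?D"
      using dim_mass_in_deviation_le[of A i x] D by (simp add: divide_right_mono)
    finally show "cmod (rho bar N x (normalized_dim_vector d A) i
                - complex_of_real (d x) * normalized_dim_vector d A i) \<le> d x * d i / sqrt ?D" .
  qed
  also have "(\<Sum>i\<in>?B. (d x * d i / sqrt ?D)^2) = (d x)^2 * (fweight d ?B / ?D)"
    using D by (simp add: fweight_def power_mult_distrib power_divide sum_distrib_left sum_divide_distrib)
  also have "sqrt \<dots> = d x * sqrt (fweight d ?B / ?D)"
    using dim_pos[of x] by (simp only: real_sqrt_mult real_sqrt_abs)
  finally show ?thesis .
qed

lemma max_relative_defect_nonneg:
  assumes "gen_set e bar N X"
  shows "0 \<le> max_relative_defect bar N d X f"
proof -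
  obtain x where x: "x \<in> X" using gen_set_nonempty[OF assms] by blast
  have "0 \<le> l2norm (\<lambda>i. rho bar N x f i - complex_of_real (d x) * f i) / d x"
    using dim_pos[of x] by (simp add: l2norm_nonneg)
  also have "\<dots> \<le> max_relative_defect bar N d X f"
    unfolding max_relative_defect_def using gen_set_finite[OF assms] x by (intro Max_ge) auto
  finally show ?thesis .
qed

lemma kaz_X_nonneg: "gen_set e bar N X \<Longrightarrow> 0 \<le> kaz_X bar N d X"
  unfolding kaz_X_eq_Inf_max_relative_defect
  using exists_l2_unit_vector max_relative_defect_nonneg by (intro cInf_greatest) auto

lemma kaz_X_le_sqrt_fol_ratio:
  assumes X: "gen_set e bar N X" and "finite A" and "A \<noteq> {}"
  shows "kaz_X bar N d X \<le> sqrt (fweight d (fboundary N X A) / fweight d A)"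
proof -
  have "max_relative_defect bar N d X (normalized_dim_vector d A)
          \<le> sqrt (fweight d (fboundary N X A) / fweight d A)"
    unfolding max_relative_defect_def
    using gen_set_finite[OF X] gen_set_nonempty[OF X] dim_pos
      l2norm_rho_normalized_dim_vector_defect_le[OF gen_set_finite[OF X] assms(2,3)]
    by (auto simp: divide_le_eq mult.commute)
  then show ?thesis
    unfolding kaz_X_eq_Inf_max_relative_defect
    using normalized_dim_vector_unit[OF assms(2,3)] max_relative_defect_nonneg[OF X]
    by (intro cInf_lower2[where x = "max_relative_defect bar N d X (normalized_dim_vector d A)"])
      (auto simp: bdd_below_def)
qed

lemma kaz_X_sq_le_fol_X:
  assumes X: "gen_set e bar N X"
  shows "(kaz_X bar N d X)^2 \<le> fol_X N d X"
  unfolding fol_X_def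
proof (rule cInf_greatest)
  fix r assume "r \<in> (\<lambda>A. fweight d (fboundary N X A) / fweight d A) ` {A. A \<noteq> {} \<and> finite A}"
  then obtain A where A: "finite A" "A \<noteq> {}"
    and r: "r = fweight d (fboundary N X A) / fweight d A" by blast
  have "0 \<le> r"
    unfolding r fweight_def by (simp add: sum_nonneg)
  then show "(kaz_X bar N d X)^2 \<le> r"
    using kaz_X_le_sqrt_fol_ratio[OF X A] kaz_X_nonneg[OF X] unfolding r
    by (metis power_mono real_sqrt_pow2)
qed blast

lemma kaz_rho_le_kaz_X: "gen_set e bar N X \<Longrightarrow> kaz_rho e bar N d \<le> kaz_X bar N d X"
  unfolding kaz_rho_def using kaz_X_nonneg by (intro cInf_lower) (auto simp: bdd_below_def)

lemma kaz_rho_nonneg: "finitely_generated e bar N \<Longrightarrow> 0 \<le> kaz_rho e bar N d"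
  unfolding kaz_rho_def finitely_generated_def using kaz_X_nonneg by (intro cInf_greatest) auto

end

theorem proposition3p21:
  fixes e :: 'i and bar :: "'i \<Rightarrow> 'i" and N :: "'i \<Rightarrow> 'i \<Rightarrow> 'i \<Rightarrow> nat" and d :: "'i \<Rightarrow> real"
  assumes "fusion_algebra e bar N d"
    and "finitely_generated e bar N"
  shows "fol e bar N d \<ge> (kaz_rho e bar N d)^2"
  unfolding fol_def
proof (rule cInf_greatest)
  show "fol_X N d ` {X. gen_set e bar N X} \<noteq> {}"
    using assms(2) by (auto simp: finitely_generated_def)
next
  fix r assume "r \<in> fol_X N d ` {X. gen_set e bar N X}"
  then obtain X where X: "gen_set e bar N X" and r: "r = fol_X N d X" by blast
  have "(kaz_rho e bar N d)^2 \<le> (kaz_X bar N d X)^2"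
    using kaz_rho_le_kaz_X[OF assms(1) X] kaz_rho_nonneg[OF assms] by (rule power_mono)
  also have "\<dots> \<le> r"
    unfolding r using kaz_X_sq_le_fol_X[OF assms(1) X] .
  finally show "(kaz_rho e bar N d)^2 \<le> r" .
qed

end
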